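(* Let $E$ be a pseudo effect algebra satisfying (RDP). If $m_1$ and $m_2$ are $\sigma$-additive measures on $E$, then so are $m_1\vee m_2$ and $m_1\wedge m_2$ (lattice operations in $\mathcal J(E)$).
   Context: Pseudo effect algebra: partial algebra $(E;+,0,1)$ such that for all $a,b,c$: (i) $a+b$ and $(a+b)+c$ exist iff $b+c$ and $a+(b+c)$ exist, and then they are equal; (ii) there is exactly one $d$ and one $e$ with $a+d=e+a=1$; (iii) if $a+b$ exists there are $d,e$ with $a+b=d+a=b+e$; (iv) if $1+a$ or $a+1$ exists then $a=0$. Order: $a\le b$ iff $a+c=b$ for some $c$. (RDP): whenever $a_1+a_2=b_1+b_2$ there are $d_1,\dots,d_4$ with $d_1+d_2=a_1$, $d_3+d_4=a_2$, $d_1+d_3=b_1$, $d_2+d_4=b_2$. Measure: $m:E\to[0,\infty)$ additive on defined sums. A signed measure $m$ is $\sigma$-additive if whenever $a_1\le a_2\le\cdots$ and $a=\bigvee_n a_n$ exists in $E$, $m(a)=\lim_n m(a_n)$; for a measure this is equivalent to: $a_n\searrow 0$ (decreasing with infimum $0$) implies $m(a_n)\to0$. $\mathcal J(E)$: signed measures that are differences of two measures, ordered by $m_1\le^+m_2$ iff $m_2-m_1$ is a measure (a lattice-ordered group under (RDP)). *)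

theory Defs
  imports Main "HOL-Library.Monad_Syntax" Complex_Main
begin

text \<open>A pseudo effect algebra on the whole type 'a: partial addition p
  (None = undefined), zero z, unit u.\<close>

definition pea :: "('a \<Rightarrow> 'a \<Rightarrow> 'a option) \<Rightarrow> 'a \<Rightarrow> 'a \<Rightarrow> bool" where
  "pea p z u \<longleftrightarrow>
     (\<forall>a b c. Option.bind (p a b) (\<lambda>x. p x c) = Option.bind (p b c) (\<lambda>y. p a y)) \<and>
     (\<forall>a. (\<exists>!d. p a d = Some u) \<and> (\<exists>!e. p e a = Some u)) \<and>
     (\<forall>a b s. p a b = Some s \<longrightarrow> (\<exists>d e. p d a = Some s \<and> p b e = Some s)) \<and>
     (\<forall>a. (p u a \<noteq> None \<or> p a u \<noteq> None) \<longrightarrow> a = z)"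

definition pea_le :: "('a \<Rightarrow> 'a \<Rightarrow> 'a option) \<Rightarrow> 'a \<Rightarrow> 'a \<Rightarrow> bool" where
  "pea_le p a b \<longleftrightarrow> (\<exists>c. p a c = Some b)"

definition RDP :: "('a \<Rightarrow> 'a \<Rightarrow> 'a option) \<Rightarrow> bool" where
  "RDP p \<longleftrightarrow> (\<forall>a1 a2 b1 b2 s. p a1 a2 = Some s \<and> p b1 b2 = Some s \<longrightarrow>
     (\<exists>d1 d2 d3 d4. p d1 d2 = Some a1 \<and> p d3 d4 = Some a2 \<and>
                    p d1 d3 = Some b1 \<and> p d2 d4 = Some b2))"

definition is_measure :: "('a \<Rightarrow> 'a \<Rightarrow> 'a option) \<Rightarrow> ('a \<Rightarrow> real) \<Rightarrow> bool" where
  "is_measure p m \<longleftrightarrow> (\<forall>a. 0 \<le> m a) \<and> (\<forall>a b c. p a b = Some c \<longrightarrow> m c = m a + m b)"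

definition pea_is_sup :: "('a \<Rightarrow> 'a \<Rightarrow> 'a option) \<Rightarrow> (nat \<Rightarrow> 'a) \<Rightarrow> 'a \<Rightarrow> bool" where
  "pea_is_sup p f a \<longleftrightarrow> (\<forall>n. pea_le p (f n) a) \<and>
     (\<forall>b. (\<forall>n. pea_le p (f n) b) \<longrightarrow> pea_le p a b)"

definition sigma_additive :: "('a \<Rightarrow> 'a \<Rightarrow> 'a option) \<Rightarrow> ('a \<Rightarrow> real) \<Rightarrow> bool" where
  "sigma_additive p m \<longleftrightarrow> (\<forall>f a. (\<forall>n. pea_le p (f n) (f (Suc n))) \<and> pea_is_sup p f a
       \<longrightarrow> (\<lambda>n. m (f n)) \<longlonglongrightarrow> m a)"

definition J :: "('a \<Rightarrow> 'a \<Rightarrow> 'a option) \<Rightarrow> ('a \<Rightarrow> real) set" where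
  "J p = {m. \<exists>\<mu> \<nu>. is_measure p \<mu> \<and> is_measure p \<nu> \<and> m = (\<lambda>x. \<mu> x - \<nu> x)}"

definition J_le :: "('a \<Rightarrow> 'a \<Rightarrow> 'a option) \<Rightarrow> ('a \<Rightarrow> real) \<Rightarrow> ('a \<Rightarrow> real) \<Rightarrow> bool" where
  "J_le p m1 m2 \<longleftrightarrow> is_measure p (\<lambda>x. m2 x - m1 x)"

definition J_sup :: "('a \<Rightarrow> 'a \<Rightarrow> 'a option) \<Rightarrow> ('a \<Rightarrow> real) \<Rightarrow> ('a \<Rightarrow> real) \<Rightarrow> ('a \<Rightarrow> real)" where
  "J_sup p m1 m2 = (THE m. m \<in> J p \<and> J_le p m1 m \<and> J_le p m2 m \<and>
      (\<forall>k\<in>J p. J_le p m1 k \<and> J_le p m2 k \<longrightarrow> J_le p m k))"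

definition J_inf :: "('a \<Rightarrow> 'a \<Rightarrow> 'a option) \<Rightarrow> ('a \<Rightarrow> real) \<Rightarrow> ('a \<Rightarrow> real) \<Rightarrow> ('a \<Rightarrow> real)" where
  "J_inf p m1 m2 = (THE m. m \<in> J p \<and> J_le p m m1 \<and> J_le p m m2 \<and>
      (\<forall>k\<in>J p. J_le p k m1 \<and> J_le p k m2 \<longrightarrow> J_le p k m))"

end

theory Submission
  imports Defs
begin

text \<open>
  Their supremum in the lattice-ordered group J(E) is given by the
  Riesz--Kantorovich formula
     (m1 \<or> m2)(a) = sup {m1 a1 + m2 a2 | a1 + a2 = a},
  and their infimum is m1 + m2 - (m1 \<or> m2).  The proof has three parts.
  (1) Order-theoretic facts about J(E) that hold for any partial operation: the
      order is antisymmetric, so J_sup / J_inf are determined by the least upper /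
      greatest lower bound property; and a measure dominated (in J(E)) by a
      sigma-additive function is itself sigma-additive, since
      0 \<le> s a - s a_n \<le> m a - m a_n along an increasing sequence a_n with supremum a.
  (2) In a pseudo effect algebra, the Riesz--Kantorovich function is
      superadditive (by reshuffling decompositions) and, under (RDP), subadditive;
      hence it is a measure, it is the supremum in J(E), and m1 + m2 minus it is
      the infimum.
  (3) The join is dominated by m1 + m2 and the meet by m1, so both inherit
      sigma-additivity from m1 and m2 by part (1).
\<close>

lemma cSup_add_le:
  fixes A B :: "real set"
  assumes A: "A \<noteq> {}" and B: "B \<noteq> {}" and le: "\<And>x y. x \<in> A \<Longrightarrow> y \<in> B \<Longrightarrow> x + y \<le> c"
  shows "Sup A + Sup B \<le> c"
proof -
  have bound_B: "Sup B \<le> c - x" if "x \<in> A" for x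
  proof (rule cSup_least[OF B])
    show "y \<le> c - x" if "y \<in> B" for y
      using le[OF \<open>x \<in> A\<close> that] by linarith
  qed
  have "Sup A \<le> c - Sup B"
  proof (rule cSup_least[OF A])
    show "x \<le> c - Sup B" if "x \<in> A" for x
      using bound_B[OF that] by linarith
  qed
  then show ?thesis by simp
qed

section \<open>Additive functions and the order of J(E)\<close>

definition additive :: "('a \<Rightarrow> 'a \<Rightarrow> 'a option) \<Rightarrow> ('a \<Rightarrow> real) \<Rightarrow> bool" where
  "additive p f \<longleftrightarrow> (\<forall>a b c. p a b = Some c \<longrightarrow> f c = f a + f b)"

lemma additiveD: "additive p f \<Longrightarrow> p a b = Some c \<Longrightarrow> f c = f a + f b"
  unfolding additive_def by blast

lemma additive_add: "additive p f \<Longrightarrow> additive p g \<Longrightarrow> additive p (\<lambda>x. f x + g x)"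
  unfolding additive_def by simp

lemma additive_diff: "additive p f \<Longrightarrow> additive p g \<Longrightarrow> additive p (\<lambda>x. f x - g x)"
  unfolding additive_def by simp

lemma measure_additive: "is_measure p m \<Longrightarrow> additive p m"
  unfolding is_measure_def additive_def by blast

lemma measure_add: "is_measure p m \<Longrightarrow> p a b = Some c \<Longrightarrow> m c = m a + m b"
  unfolding is_measure_def by blast

lemma measure_nonneg: "is_measure p m \<Longrightarrow> 0 \<le> m a"
  unfolding is_measure_def by blast

lemma measure_mono: "is_measure p m \<Longrightarrow> pea_le p a b \<Longrightarrow> m a \<le> m b"
  unfolding pea_le_def is_measure_def by fastforce

lemma measureI: "additive p f \<Longrightarrow> (\<And>x. 0 \<le> f x) \<Longrightarrow> is_measure p f"
  unfolding is_measure_def additive_def by blast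

lemma difference_in_J:
  assumes "is_measure p \<mu>" "is_measure p \<nu>"
  shows "(\<lambda>x. \<mu> x - \<nu> x) \<in> J p"
  unfolding J_def by (rule CollectI, rule exI[of _ \<mu>], rule exI[of _ \<nu>]) (simp add: assms)

lemma measure_in_J:
  assumes "is_measure p m"
  shows "m \<in> J p"
proof -
  have "is_measure p (\<lambda>_. 0)"
    unfolding is_measure_def by simp
  from difference_in_J[OF assms this] show ?thesis
    by simp
qed

lemma additive_J: "m \<in> J p \<Longrightarrow> additive p m"
  unfolding J_def by (auto intro: additive_diff measure_additive)

lemma J_le_pointwise: "J_le p f g \<Longrightarrow> f x \<le> g x"
  unfolding J_le_def using measure_nonneg by fastforce

lemma J_leI:
  assumes "additive p f" "additive p g" "\<And>x. f x \<le> g x"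
  shows "J_le p f g"
  using assms unfolding J_le_def is_measure_def additive_def by simp

lemma J_le_antisym: "J_le p f g \<Longrightarrow> J_le p g f \<Longrightarrow> f = g"
  by (rule ext) (meson J_le_pointwise antisym)

text \<open>Antisymmetry makes the descriptions in J_sup and J_inf unique, so any
  least upper bound (greatest lower bound) in J(E) is the value of J_sup (J_inf).\<close>
lemma J_sup_eqI:
  assumes "m \<in> J p" "J_le p m1 m" "J_le p m2 m"
    and least: "\<And>k. k \<in> J p \<Longrightarrow> J_le p m1 k \<Longrightarrow> J_le p m2 k \<Longrightarrow> J_le p m k"
  shows "J_sup p m1 m2 = m"
  unfolding J_sup_def
proof (rule the_equality)
  show "m \<in> J p \<and> J_le p m1 m \<and> J_le p m2 m \<and>
      (\<forall>k\<in>J p. J_le p m1 k \<and> J_le p m2 k \<longrightarrow> J_le p m k)"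
    using assms by blast
  fix m' assume "m' \<in> J p \<and> J_le p m1 m' \<and> J_le p m2 m' \<and>
      (\<forall>k\<in>J p. J_le p m1 k \<and> J_le p m2 k \<longrightarrow> J_le p m' k)"
  then have m': "m' \<in> J p" "J_le p m1 m'" "J_le p m2 m'"
    and least': "\<And>k. k \<in> J p \<Longrightarrow> J_le p m1 k \<Longrightarrow> J_le p m2 k \<Longrightarrow> J_le p m' k"
    by blast+
  show "m' = m"
    using least'[OF assms(1-3)] least[OF m'] by (rule J_le_antisym)
qed

lemma J_inf_eqI:
  assumes "m \<in> J p" "J_le p m m1" "J_le p m m2"
    and greatest: "\<And>k. k \<in> J p \<Longrightarrow> J_le p k m1 \<Longrightarrow> J_le p k m2 \<Longrightarrow> J_le p k m"
  shows "J_inf p m1 m2 = m"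
  unfolding J_inf_def
proof (rule the_equality)
  show "m \<in> J p \<and> J_le p m m1 \<and> J_le p m m2 \<and>
      (\<forall>k\<in>J p. J_le p k m1 \<and> J_le p k m2 \<longrightarrow> J_le p k m)"
    using assms by blast
  fix m' assume "m' \<in> J p \<and> J_le p m' m1 \<and> J_le p m' m2 \<and>
      (\<forall>k\<in>J p. J_le p k m1 \<and> J_le p k m2 \<longrightarrow> J_le p k m')"
  then have m': "m' \<in> J p" "J_le p m' m1" "J_le p m' m2"
    and greatest': "\<And>k. k \<in> J p \<Longrightarrow> J_le p k m1 \<Longrightarrow> J_le p k m2 \<Longrightarrow> J_le p k m'"
    by blast+
  show "m' = m"
    using greatest[OF m'] greatest'[OF assms(1-3)] by (rule J_le_antisym)
qed

section \<open>Sigma-additivity\<close>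

lemma sigma_additiveD:
  "sigma_additive p m \<Longrightarrow> \<forall>n. pea_le p (f n) (f (Suc n)) \<Longrightarrow> pea_is_sup p f a
    \<Longrightarrow> (\<lambda>n. m (f n)) \<longlonglongrightarrow> m a"
  unfolding sigma_additive_def by blast

lemma sigma_additive_add:
  assumes "sigma_additive p m1" "sigma_additive p m2"
  shows "sigma_additive p (\<lambda>x. m1 x + m2 x)"
  unfolding sigma_additive_def
proof (intro allI impI, elim conjE)
  fix f a assume chain: "\<forall>n. pea_le p (f n) (f (Suc n))" and sup: "pea_is_sup p f a"
  show "(\<lambda>n. m1 (f n) + m2 (f n)) \<longlonglongrightarrow> m1 a + m2 a"
    using sigma_additiveD[OF assms(1) chain sup] sigma_additiveD[OF assms(2) chain sup]
    by (rule tendsto_add)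
qed

text \<open>A measure below a sigma-additive function in J(E) is sigma-additive: along an
  increasing sequence a_n with supremum a we have 0 \<le> s a - s a_n \<le> m a - m a_n,
  since both s and m - s are monotone.\<close>
lemma sigma_additive_dominated:
  assumes s: "is_measure p s" and dom: "J_le p s m" and m: "sigma_additive p m"
  shows "sigma_additive p s"
  unfolding sigma_additive_def
proof (intro allI impI, elim conjE)
  fix f a assume chain: "\<forall>n. pea_le p (f n) (f (Suc n))" and sup: "pea_is_sup p f a"
  have below: "pea_le p (f n) a" for n
    using sup unfolding pea_is_sup_def by blast
  have upper: "s (f n) \<le> s a" for n
    using measure_mono[OF s below] .
  have gap: "m (f n) - s (f n) \<le> m a - s a" for n
    using measure_mono[OF dom[unfolded J_le_def] below] .
  have lower: "s a - (m a - m (f n)) \<le> s (f n)" for n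
    using gap[of n] by linarith
  have "(\<lambda>n. s a - (m a - m (f n))) \<longlonglongrightarrow> s a - (m a - m a)"
    by (intro tendsto_intros sigma_additiveD[OF m chain sup])
  then have lim: "(\<lambda>n. s a - (m a - m (f n))) \<longlonglongrightarrow> s a"
    by simp
  have "eventually (\<lambda>n. s a - (m a - m (f n)) \<le> s (f n)) sequentially"
    using lower by simp
  moreover have "eventually (\<lambda>n. s (f n) \<le> s a) sequentially"
    using upper by simp
  ultimately show "(\<lambda>n. s (f n)) \<longlonglongrightarrow> s a"
    using lim by (rule tendsto_sandwich[OF _ _ _ tendsto_const])
qed

section \<open>Elementary facts on pseudo effect algebras\<close>

text \<open>The algebraic facts needed below: associativity in both directions, moving a
  summand across (axiom iii), and that 0 is a two-sided neutral element, which
  follows from the uniqueness of complements (ii) together with axiom (iv).\<close>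

locale pseudo_effect_algebra =
  fixes p :: "'a \<Rightarrow> 'a \<Rightarrow> 'a option" and z u :: 'a
  assumes pea: "pea p z u"
begin

lemma assoc: "Option.bind (p a b) (\<lambda>x. p x c) = Option.bind (p b c) (\<lambda>y. p a y)"
  using pea unfolding pea_def by (elim conjE) (erule allE, erule allE, erule allE, assumption)

lemma assoc_right:
  assumes "p a b = Some x" "p x c = Some r"
  shows "\<exists>y. p b c = Some y \<and> p a y = Some r"
  using assoc[of a b c] assms by (cases "p b c") auto

lemma assoc_left:
  assumes "p b c = Some y" "p a y = Some r"
  shows "\<exists>x. p a b = Some x \<and> p x c = Some r"
  using assoc[of a b c] assms by (cases "p a b") auto

lemma unique_right_complement: "\<exists>!d. p a d = Some u"
  using pea unfolding pea_def by (elim conjE) (erule allE, erule conjE, assumption)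

lemma unique_left_complement: "\<exists>!e. p e a = Some u"
  using pea unfolding pea_def by (elim conjE) (erule allE, erule conjE, assumption)

lemma move_left: "p a b = Some s \<Longrightarrow> \<exists>d. p d a = Some s"
  using pea unfolding pea_def
  by (elim conjE) (erule allE, erule allE, erule allE, erule impE, assumption, blast)

lemma unit_summand_zero: "p u a \<noteq> None \<or> p a u \<noteq> None \<Longrightarrow> a = z"
  using pea unfolding pea_def by (elim conjE) (erule allE, erule impE, assumption, assumption)

lemma unit_plus_zero: "p u z = Some u"
proof -
  obtain d where "p u d = Some u"
    using unique_right_complement by blast
  moreover from this have "d = z"
    by (intro unit_summand_zero) simp
  ultimately show ?thesis by simp
qed

lemma zero_plus_unit: "p z u = Some u"
proof -
  obtain e where "p e u = Some u"
    using unique_left_complement by blast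
  moreover from this have "e = z"
    by (intro unit_summand_zero) simp
  ultimately show ?thesis by simp
qed

lemma zero_right: "p b z = Some b"
proof -
  obtain e where e: "p e b = Some u"
    using unique_left_complement by blast
  then obtain y where y: "p b z = Some y" "p e y = Some u"
    using assoc_right[OF e unit_plus_zero] by blast
  have "y = b"
    using unique_right_complement[of e] e y by blast
  with y show ?thesis by simp
qed

lemma zero_left: "p z b = Some b"
proof -
  obtain d where d: "p b d = Some u"
    using unique_right_complement by blast
  then obtain x where x: "p z b = Some x" "p x d = Some u"
    using assoc_left[OF d zero_plus_unit] by blast
  have "x = b"
    using unique_left_complement[of d] d x by blast
  with x show ?thesis by simp
qed

lemma measure_zero: "is_measure p m \<Longrightarrow> m z = 0"
  using measure_add[of p m z z z] zero_right[of z] by simp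

text \<open>Reshuffling: from c = (a1 + a2) + (b1 + b2) we get c = (a1 + b1') + (a2 + b2)
  where b1' is b1 moved across a2, i.e. a2 + b1 = b1' + a2.\<close>
lemma interchange:
  assumes c: "p a b = Some c" and a: "p a1 a2 = Some a" and b: "p b1 b2 = Some b"
  obtains b1' w t v where "p a2 b1 = Some w" "p b1' a2 = Some w"
    "p a1 b1' = Some t" "p a2 b2 = Some v" "p t v = Some c"
proof -
  obtain y where y: "p a2 b = Some y" "p a1 y = Some c"
    using assoc_right[OF a c] by blast
  obtain w where w: "p a2 b1 = Some w" "p w b2 = Some y"
    using assoc_left[OF b y(1)] by blast
  obtain b1' where b1': "p b1' a2 = Some w"
    using move_left[OF w(1)] by blast
  obtain v where v: "p a2 b2 = Some v" "p b1' v = Some y"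
    using assoc_right[OF b1' w(2)] by blast
  obtain t where t: "p a1 b1' = Some t" "p t v = Some c"
    using assoc_left[OF v(2) y(2)] by blast
  show ?thesis
    by (rule that[OF w(1) b1' t(1) v(1) t(2)])
qed

section \<open>The Riesz--Kantorovich supremum of two measures\<close>

definition riesz_sup :: "('a \<Rightarrow> real) \<Rightarrow> ('a \<Rightarrow> real) \<Rightarrow> 'a \<Rightarrow> real" where
  "riesz_sup m1 m2 a = Sup {m1 a1 + m2 a2 | a1 a2. p a1 a2 = Some a}"

definition riesz_inf :: "('a \<Rightarrow> real) \<Rightarrow> ('a \<Rightarrow> real) \<Rightarrow> 'a \<Rightarrow> real" where
  "riesz_inf m1 m2 a = m1 a + m2 a - riesz_sup m1 m2 a"

context
  fixes m1 m2 :: "'a \<Rightarrow> real"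
  assumes measure1: "is_measure p m1" and measure2: "is_measure p m2"
begin

text \<open>Each decomposition of a is bounded by m1 a + m2 a, so the supremum is finite.\<close>
lemma decomposition_le_sum:
  assumes "p a1 a2 = Some a"
  shows "m1 a1 + m2 a2 \<le> m1 a + m2 a"
  using measure_add[OF measure1 assms] measure_add[OF measure2 assms]
    measure_nonneg[OF measure1, of a2] measure_nonneg[OF measure2, of a1] by simp

lemma riesz_sup_upper:
  assumes "p a1 a2 = Some a"
  shows "m1 a1 + m2 a2 \<le> riesz_sup m1 m2 a"
proof -
  have "bdd_above {m1 a1 + m2 a2 | a1 a2. p a1 a2 = Some a}"
    using decomposition_le_sum by (intro bdd_aboveI[where M = "m1 a + m2 a"]) blast
  then show ?thesis
    unfolding riesz_sup_def using assms by (intro cSup_upper) blast+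
qed

lemma riesz_sup_least:
  assumes "\<And>a1 a2. p a1 a2 = Some a \<Longrightarrow> m1 a1 + m2 a2 \<le> c"
  shows "riesz_sup m1 m2 a \<le> c"
  unfolding riesz_sup_def using assms zero_right[of a] by (intro cSup_least) blast+

lemma riesz_sup_ge1: "m1 a \<le> riesz_sup m1 m2 a"
  using riesz_sup_upper[OF zero_right[of a]] measure_zero[OF measure2] by simp

lemma riesz_sup_ge2: "m2 a \<le> riesz_sup m1 m2 a"
  using riesz_sup_upper[OF zero_left[of a]] measure_zero[OF measure1] by simp

lemma riesz_sup_below_sum: "riesz_sup m1 m2 a \<le> m1 a + m2 a"
  using decomposition_le_sum by (rule riesz_sup_least)

lemma riesz_sup_least_additive:
  assumes "additive p k" "\<And>x. m1 x \<le> k x" "\<And>x. m2 x \<le> k x"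
  shows "riesz_sup m1 m2 a \<le> k a"
proof (rule riesz_sup_least)
  fix a1 a2 assume "p a1 a2 = Some a"
  then have "k a = k a1 + k a2"
    using additiveD[OF assms(1)] by blast
  then show "m1 a1 + m2 a2 \<le> k a"
    using assms(2)[of a1] assms(3)[of a2] by linarith
qed

text \<open>Superadditivity holds in every pseudo effect algebra: two decompositions of
  a and b combine, by reshuffling, into a decomposition of a + b.\<close>
lemma riesz_sup_superadditive:
  assumes c: "p a b = Some c"
  shows "riesz_sup m1 m2 a + riesz_sup m1 m2 b \<le> riesz_sup m1 m2 c"
  unfolding riesz_sup_def[of _ _ a] riesz_sup_def[of _ _ b]
proof (rule cSup_add_le)
  show "{m1 a1 + m2 a2 |a1 a2. p a1 a2 = Some a} \<noteq> {}"
       "{m1 b1 + m2 b2 |b1 b2. p b1 b2 = Some b} \<noteq> {}"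
    using zero_right by blast+
  fix x y
  assume "x \<in> {m1 a1 + m2 a2 |a1 a2. p a1 a2 = Some a}"
    and "y \<in> {m1 b1 + m2 b2 |b1 b2. p b1 b2 = Some b}"
  then obtain a1 a2 b1 b2 where a: "p a1 a2 = Some a" and b: "p b1 b2 = Some b"
    and xy: "x = m1 a1 + m2 a2" "y = m1 b1 + m2 b2" by blast
  obtain b1' w t v where w: "p a2 b1 = Some w" "p b1' a2 = Some w"
    and t: "p a1 b1' = Some t" and v: "p a2 b2 = Some v" and tv: "p t v = Some c"
    using interchange[OF c a b] .
  have "m1 b1' = m1 b1"
    using measure_add[OF measure1 w(1)] measure_add[OF measure1 w(2)] by simp
  then have "x + y = m1 t + m2 v"
    using xy measure_add[OF measure1 t] measure_add[OF measure2 v] by simp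
  then show "x + y \<le> riesz_sup m1 m2 c"
    using riesz_sup_upper[OF tv] by simp
qed

context
  assumes rdp: "RDP p"
begin

text \<open>Subadditivity is where (RDP) enters: a decomposition c1 + c2 of a + b is
  refined into pieces that decompose a and b separately.\<close>
lemma riesz_sup_subadditive:
  assumes c: "p a b = Some c"
  shows "riesz_sup m1 m2 c \<le> riesz_sup m1 m2 a + riesz_sup m1 m2 b"
proof (rule riesz_sup_least)
  fix c1 c2 assume "p c1 c2 = Some c"
  then obtain d1 d2 d3 d4 where d: "p d1 d2 = Some c1" "p d3 d4 = Some c2"
    "p d1 d3 = Some a" "p d2 d4 = Some b"
    using rdp c unfolding RDP_def by blast
  have "m1 c1 = m1 d1 + m1 d2" "m2 c2 = m2 d3 + m2 d4"
    using measure_add[OF measure1 d(1)] measure_add[OF measure2 d(2)] .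
  then show "m1 c1 + m2 c2 \<le> riesz_sup m1 m2 a + riesz_sup m1 m2 b"
    using riesz_sup_upper[OF d(3)] riesz_sup_upper[OF d(4)] by simp
qed

lemma riesz_sup_additive: "additive p (riesz_sup m1 m2)"
  unfolding additive_def
proof (intro allI impI)
  fix a b c assume "p a b = Some c"
  then show "riesz_sup m1 m2 c = riesz_sup m1 m2 a + riesz_sup m1 m2 b"
    using riesz_sup_subadditive riesz_sup_superadditive by (meson antisym)
qed

lemma riesz_sup_measure: "is_measure p (riesz_sup m1 m2)"
proof (rule measureI[OF riesz_sup_additive])
  show "0 \<le> riesz_sup m1 m2 x" for x
    using measure_nonneg[OF measure1, of x] riesz_sup_ge1[of x] by linarith
qed

lemma riesz_sup_le_sum: "J_le p (riesz_sup m1 m2) (\<lambda>x. m1 x + m2 x)"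
  using riesz_sup_additive additive_add[OF measure_additive[OF measure1] measure_additive[OF measure2]]
    riesz_sup_below_sum
  by (rule J_leI)

lemma J_sup_riesz_sup: "J_sup p m1 m2 = riesz_sup m1 m2"
proof (rule J_sup_eqI)
  show "riesz_sup m1 m2 \<in> J p"
    using riesz_sup_measure by (rule measure_in_J)
  show "J_le p m1 (riesz_sup m1 m2)"
    using measure_additive[OF measure1] riesz_sup_additive riesz_sup_ge1 by (rule J_leI)
  show "J_le p m2 (riesz_sup m1 m2)"
    using measure_additive[OF measure2] riesz_sup_additive riesz_sup_ge2 by (rule J_leI)
  fix k assume k: "k \<in> J p" and above: "J_le p m1 k" "J_le p m2 k"
  have below_k: "riesz_sup m1 m2 x \<le> k x" for x
    using riesz_sup_least_additive[OF additive_J[OF k]] above[THEN J_le_pointwise] by blast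
  show "J_le p (riesz_sup m1 m2) k"
    using riesz_sup_additive additive_J[OF k] below_k by (rule J_leI)
qed

lemma riesz_inf_additive: "additive p (riesz_inf m1 m2)"
  unfolding riesz_inf_def
  using measure_additive[OF measure1] measure_additive[OF measure2] riesz_sup_additive
  by (intro additive_diff additive_add)

lemma riesz_inf_measure: "is_measure p (riesz_inf m1 m2)"
proof (rule measureI[OF riesz_inf_additive])
  show "0 \<le> riesz_inf m1 m2 x" for x
    unfolding riesz_inf_def using riesz_sup_below_sum[of x] by linarith
qed

lemma riesz_inf_le1: "J_le p (riesz_inf m1 m2) m1"
proof (rule J_leI[OF riesz_inf_additive measure_additive[OF measure1]])
  show "riesz_inf m1 m2 x \<le> m1 x" for x
    unfolding riesz_inf_def using riesz_sup_ge2[of x] by linarith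
qed

lemma riesz_inf_le2: "J_le p (riesz_inf m1 m2) m2"
proof (rule J_leI[OF riesz_inf_additive measure_additive[OF measure2]])
  show "riesz_inf m1 m2 x \<le> m2 x" for x
    unfolding riesz_inf_def using riesz_sup_ge1[of x] by linarith
qed

text \<open>m1 + m2 minus the supremum is the infimum of m1 and m2 in J(E): if k \<le> m1, m2
  then m1 + m2 - k is an additive upper bound of m1 and m2.\<close>
lemma J_inf_riesz_inf: "J_inf p m1 m2 = riesz_inf m1 m2"
proof (rule J_inf_eqI[OF _ riesz_inf_le1 riesz_inf_le2])
  have "is_measure p (\<lambda>x. m1 x + m2 x)"
    using additive_add[OF measure_additive[OF measure1] measure_additive[OF measure2]]
  proof (rule measureI)
    show "0 \<le> m1 x + m2 x" for x
      using measure_nonneg[OF measure1, of x] measure_nonneg[OF measure2, of x] by linarith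
  qed
  then show "riesz_inf m1 m2 \<in> J p"
    unfolding riesz_inf_def using riesz_sup_measure by (rule difference_in_J)
  fix k assume k: "k \<in> J p" and below: "J_le p k m1" "J_le p k m2"
  have add_k: "additive p (\<lambda>x. m1 x + m2 x - k x)"
    using measure_additive[OF measure1] measure_additive[OF measure2] additive_J[OF k]
    by (intro additive_diff additive_add)
  have sup_bound: "riesz_sup m1 m2 x \<le> m1 x + m2 x - k x" for x
  proof (rule riesz_sup_least_additive[OF add_k])
    show "m1 y \<le> m1 y + m2 y - k y" "m2 y \<le> m1 y + m2 y - k y" for y
      using below[THEN J_le_pointwise, of y] by linarith+
  qed
  have below_inf: "k x \<le> riesz_inf m1 m2 x" for x
    unfolding riesz_inf_def using sup_bound[of x] by linarith
  show "J_le p k (riesz_inf m1 m2)"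
    using additive_J[OF k] riesz_inf_additive below_inf by (rule J_leI)
qed

end
end
end

theorem proposition4p4:
  fixes p :: "'a \<Rightarrow> 'a \<Rightarrow> 'a option" and z u :: 'a and m1 m2 :: "'a \<Rightarrow> real"
  assumes "pea p z u" and "RDP p"
    and "is_measure p m1" and "sigma_additive p m1"
    and "is_measure p m2" and "sigma_additive p m2"
  shows "is_measure p (J_sup p m1 m2) \<and> sigma_additive p (J_sup p m1 m2) \<and>
         is_measure p (J_inf p m1 m2) \<and> sigma_additive p (J_inf p m1 m2)"
proof -
  interpret pseudo_effect_algebra p z u
    using assms(1) by unfold_locales
  note measures = assms(3,5) and rdp = assms(2)
  have sup_measure: "is_measure p (riesz_sup m1 m2)"
    and inf_measure: "is_measure p (riesz_inf m1 m2)"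
    using riesz_sup_measure[OF measures rdp] riesz_inf_measure[OF measures rdp] .
  \<comment> \<open>the join is dominated by the sigma-additive function m1 + m2, the meet by m1\<close>
  have "sigma_additive p (riesz_sup m1 m2)"
    using sup_measure riesz_sup_le_sum[OF measures rdp] sigma_additive_add[OF assms(4,6)]
    by (rule sigma_additive_dominated)
  moreover have "sigma_additive p (riesz_inf m1 m2)"
    using inf_measure riesz_inf_le1[OF measures rdp] assms(4)
    by (rule sigma_additive_dominated)
  ultimately show ?thesis
    unfolding J_sup_riesz_sup[OF measures rdp] J_inf_riesz_inf[OF measures rdp]
    using sup_measure inf_measure by blast
qed

end
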